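(* Let $q\ge 2$ be an integer and define $s_q(0)=0$ and $s_q(p)=s_q(p-1)+\lceil (s_q(p-1)+1)/(q-1)\rceil$ for positive integers $p$. Then $\operatorname{slog}(s_q(p),q)=p$ for all $p\ge0$, and for every integer $k\ge 0$, $\operatorname{slog}(k,q)$ equals the least $p\ge 0$ such that $k\le s_q(p)$.
   Context: The step logarithm is defined for positive integers $q$ and nonnegative integers $p$ by $\operatorname{slog}(0,q)=0$ and $\operatorname{slog}(p,q)=\operatorname{slog}(p-\lceil p/q\rceil,q)+1$ for $p\ge1$. *)

theory Defs
  imports Complex_Main
begin

function slog :: "nat \<Rightarrow> nat \<Rightarrow> nat" where
  "slog p q = (if p = 0 \<or> q = 0 then 0
               else slog (p - nat \<lceil>real p / real q\<rceil>) q + 1)"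
  by auto
termination
proof (relation "measure fst")
  fix p q :: nat
  assume "\<not> (p = 0 \<or> q = 0)"
  then have "real p / real q > 0" by simp
  then have "nat \<lceil>real p / real q\<rceil> > 0" by simp
  with \<open>\<not> (p = 0 \<or> q = 0)\<close> show "((p - nat \<lceil>real p / real q\<rceil>, q), p, q) \<in> measure fst"
    by simp
qed auto

declare slog.simps [simp del]

fun sq :: "nat \<Rightarrow> nat \<Rightarrow> nat" where
  "sq q 0 = 0"
| "sq q (Suc p) = sq q p + nat \<lceil>(real (sq q p) + 1) / (real q - 1)\<rceil>"

end

theory Submission
  imports Defs
begin

text \<open>One step of the step logarithm sends \<open>k\<close> to \<open>k - \<lceil>k/q\<rceil>\<close>, and
  \<open>k - \<lceil>k/q\<rceil> \<le> m \<longleftrightarrow> k \<le> m + \<lceil>(m+1)/(q-1)\<rceil>\<close>. So \<open>s\<^sub>q(p)\<close> is the largest \<open>k\<close>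
  reducible to \<open>0\<close> in \<open>p\<close> steps, i.e. \<open>slog k q \<le> p \<longleftrightarrow> k \<le> s\<^sub>q(p)\<close> by induction on \<open>p\<close>.
  This Galois connection together with strict monotonicity of \<open>s\<^sub>q\<close> gives both claims.\<close>

lemma diff_ceiling_divide_le_iff:
  fixes q k m :: nat
  assumes q: "q \<ge> 2"
  shows "k - nat \<lceil>real k / real q\<rceil> \<le> m \<longleftrightarrow>
         k \<le> m + nat \<lceil>(real m + 1) / (real q - 1)\<rceil>"
proof -
  have q_pos: "real q > 0" "real q - 1 > 0"
    using q by auto
  have ceilings_nonneg: "\<lceil>real k / real q\<rceil> \<ge> 0" "\<lceil>(real m + 1) / (real q - 1)\<rceil> \<ge> 0"
    using q_pos by (simp_all add: zero_le_ceiling less_le_trans[of "-1" 0])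
  have "k - nat \<lceil>real k / real q\<rceil> \<le> m \<longleftrightarrow> int k - int m \<le> \<lceil>real k / real q\<rceil>"
    using ceilings_nonneg by linarith
  also have "\<dots> \<longleftrightarrow> real k - real m - 1 < real k / real q"
    unfolding le_ceiling_iff by simp
  also have "\<dots> \<longleftrightarrow> (real k - real m - 1) * real q < real k"
    using q_pos by (simp add: pos_less_divide_eq)
  also have "\<dots> \<longleftrightarrow> (real k - real m - 1) * (real q - 1) < real m + 1"
    by (simp add: algebra_simps)
  also have "\<dots> \<longleftrightarrow> real k - real m - 1 < (real m + 1) / (real q - 1)"
    using q_pos by (simp add: pos_less_divide_eq)
  also have "\<dots> \<longleftrightarrow> int k - int m \<le> \<lceil>(real m + 1) / (real q - 1)\<rceil>"
    unfolding le_ceiling_iff by simp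
  also have "\<dots> \<longleftrightarrow> k \<le> m + nat \<lceil>(real m + 1) / (real q - 1)\<rceil>"
    using ceilings_nonneg by linarith
  finally show ?thesis .
qed

lemma slog_step:
  assumes "k > 0" and "q > 0"
  shows "slog k q = slog (k - nat \<lceil>real k / real q\<rceil>) q + 1"
  using assms by (subst slog.simps) simp

lemma slog_le_iff_le_sq:
  assumes q: "q \<ge> 2"
  shows "slog k q \<le> p \<longleftrightarrow> k \<le> sq q p"
proof (induction p arbitrary: k)
  case 0
  show ?case
    using q by (subst slog.simps) auto
next
  case (Suc p)
  show ?case
  proof (cases "k = 0")
    case True
    then show ?thesis by (subst slog.simps) simp
  next
    case False
    then show ?thesis
      using q slog_step[of k q] Suc diff_ceiling_divide_le_iff[OF q] by simp
  qed
qed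

lemma sq_less_Suc:
  assumes "q \<ge> 2"
  shows "sq q p < sq q (Suc p)"
  using assms by (simp add: add_pos_pos)

lemma slog_eq_Least:
  assumes q: "q \<ge> 2"
  shows "slog k q = (LEAST p. k \<le> sq q p)"
  by (rule Least_equality[symmetric]) (simp_all add: slog_le_iff_le_sq[OF q, symmetric])

lemma slog_sq:
  assumes q: "q \<ge> 2"
  shows "slog (sq q p) q = p"
proof -
  have "slog (sq q p) q \<le> p"
    by (simp add: slog_le_iff_le_sq[OF q])
  moreover have "\<not> slog (sq q p) q \<le> p'" if "p = Suc p'" for p'
    using sq_less_Suc[OF q, of p'] that by (simp add: slog_le_iff_le_sq[OF q])
  ultimately show ?thesis
    by (cases p) auto
qed

theorem mainTheorem9:
  fixes q :: nat
  assumes "q \<ge> 2"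
  shows "(\<forall>p. slog (sq q p) q = p) \<and>
         (\<forall>k. slog k q = (LEAST p. k \<le> sq q p))"
  using slog_sq[OF assms] slog_eq_Least[OF assms] by blast

end
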